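(* Let $\alpha>4$ and $0<N_1\le N_2$. Consider the two-player Random Access Game in which player $i\in\{1,2\}$ chooses $\Lambda_i\in[0,N_i]$ and receives payoff \[ U_i(\Lambda_1,\Lambda_2)=\sup_{\beta>0}\ \Lambda_i\log(1+\beta)\,e^{-(\Lambda_1+\Lambda_2)\beta^{2/\alpha}} . \] Let $\Lambda^*(\alpha/2)$ be the unique positive solution $L$ of \[ \frac{\alpha}{4}=\left(1+L^{\alpha/4}\right)\log\left(1+L^{-\alpha/4}\right). \] Then the game has a unique Nash equilibrium. If $\sqrt{\Lambda^*(\alpha/2)}<N_1$, this equilibrium is \[ (\Lambda_1^*,\Lambda_2^* )=\left(\sqrt{\Lambda^*(\alpha/2)},\sqrt{\Lambda^*(\alpha/2)}\right). \] Otherwise it is given by $\Lambda_1^*=N_1$ and $\Lambda_2^*=\min(x,N_2)$, where $x$ is the solution of \[ N_1=x\left(\frac{\alpha}{2\left(1+x^{\alpha/2}\right)\log\left(1+x^{-\alpha/2}\right)}-1\right). \]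
   Context: A Nash equilibrium is a pair $(\Lambda_1^*,\Lambda_2^* )\in[0,N_1]\times[0,N_2]$ such that $\Lambda_1^*$ maximizes $U_1(\cdot,\Lambda_2^* )$ over $[0,N_1]$ and $\Lambda_2^*$ maximizes $U_2(\Lambda_1^*,\cdot)$ over $[0,N_2]$. Here $\log$ is the natural logarithm. *)

theory Defs
  imports Complex_Main
begin

definition payoff :: "real \<Rightarrow> nat \<Rightarrow> real \<Rightarrow> real \<Rightarrow> real" where
  "payoff \<alpha> i L1 L2 =
     (SUP \<beta>\<in>{0<..}. (if i = 1 then L1 else L2) * ln (1 + \<beta>)
                     * exp (- (L1 + L2) * \<beta> powr (2 / \<alpha>)))"

definition is_nash :: "real \<Rightarrow> real \<Rightarrow> real \<Rightarrow> real \<times> real \<Rightarrow> bool" where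
  "is_nash \<alpha> N1 N2 p \<longleftrightarrow>
     fst p \<in> {0..N1} \<and> snd p \<in> {0..N2} \<and>
     (\<forall>L1\<in>{0..N1}. payoff \<alpha> 1 L1 (snd p) \<le> payoff \<alpha> 1 (fst p) (snd p)) \<and>
     (\<forall>L2\<in>{0..N2}. payoff \<alpha> 2 (fst p) L2 \<le> payoff \<alpha> 2 (fst p) (snd p))"

text \<open>Lambda^*(a) evaluated at a = alpha/2: the unique positive L with
  alpha/4 = (1 + L^(alpha/4)) log(1 + L^(-alpha/4)).\<close>
definition Lambda_star :: "real \<Rightarrow> real" where
  "Lambda_star \<alpha> = (THE L. L > 0 \<and>
     \<alpha> / 4 = (1 + L powr (\<alpha> / 4)) * ln (1 + L powr (- \<alpha> / 4)))"

definition x_sol :: "real \<Rightarrow> real \<Rightarrow> real" where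
  "x_sol \<alpha> N1 = (THE x. x > 0 \<and>
     N1 = x * (\<alpha> / (2 * (1 + x powr (\<alpha> / 2)) * ln (1 + x powr (- \<alpha> / 2))) - 1))"

end

theory Submission
  imports Defs
begin

text \<open>Substituting \<open>\<beta> = t powr a\<close> with \<open>a = \<alpha> / 2\<close>, a player with density \<open>L\<close> facing the
  density \<open>\<lambda>\<close> of the opponent receives the maximum over \<open>t > 0\<close> of
  \<open>L * ln (1 + t powr a) * exp (- (L + \<lambda>) * t)\<close>. In the coordinates \<open>(ln L, ln t)\<close> the
  logarithm of this function is strictly concave, so the best response on \<open>[0, N]\<close> is unique:
  it is \<open>L = min N (1 / t)\<close>, where the optimal threshold \<open>t\<close> solves the first-order condition
  \<open>\<epsilon>(t) = (L + \<lambda>) * t\<close> for the elasticity \<open>\<epsilon>\<close> of \<open>ln (1 + t powr a)\<close>. A Nash equilibrium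
  is therefore a common threshold \<open>t\<close> with \<open>\<epsilon>(t) = min (N1 * t) 1 + min (N2 * t) 1\<close>. The
  left side is strictly decreasing and the right side nondecreasing in \<open>t\<close>, which gives
  uniqueness; the cases where both, one or none of the capacity constraints bind give the
  explicit equilibria.\<close>

section \<open>The elasticity of \<open>ln (1 + t powr a)\<close>\<close>

text \<open>Equivalently, the derivative of \<open>ln (ln (1 + t powr a))\<close> with respect to \<open>ln t\<close>.\<close>
definition elasticity :: "real \<Rightarrow> real \<Rightarrow> real" where
  "elasticity a t = a * t powr a / ((1 + t powr a) * ln (1 + t powr a))"

lemma ln1p_ratio_strict_mono:
  fixes u v :: real
  assumes "0 < u" "u < v"
  shows "(1 + u) * ln (1 + u) / u < (1 + v) * ln (1 + v) / v"
proof (rule DERIV_pos_imp_increasing[OF \<open>u < v\<close>])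
  fix x assume "u \<le> x" "x \<le> v"
  then have "0 < x" using assms by simp
  have "((\<lambda>x. (1 + x) * ln (1 + x) / x) has_real_derivative (x - ln (1 + x)) / x\<^sup>2) (at x)"
    using \<open>0 < x\<close> by (auto intro!: derivative_eq_intros) (simp add: power2_eq_square algebra_simps)
  moreover have "0 < (x - ln (1 + x)) / x\<^sup>2"
    using ln_add_one_self_less_self \<open>0 < x\<close> by simp
  ultimately show "\<exists>y. ((\<lambda>x. (1 + x) * ln (1 + x) / x) has_real_derivative y) (at x) \<and> 0 < y"
    by blast
qed

lemma ln_one_plus_pos: "0 < (u::real) \<Longrightarrow> 0 < ln (1 + u)"
  by (simp add: ln_gt_zero)

lemma elasticity_strict_decreasing:
  assumes "0 < a" "0 < t" "t < t'"
  shows "elasticity a t' < elasticity a t"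
proof -
  define r where "r u = (1 + u) * ln (1 + u) / u" for u :: real
  have ela: "elasticity a s = a / r (s powr a)" if "0 < s" for s
    using that unfolding elasticity_def r_def by simp
  have "r (t powr a) < r (t' powr a)"
    unfolding r_def using assms by (intro ln1p_ratio_strict_mono powr_less_mono2) auto
  moreover have "0 < r (t powr a)"
    unfolding r_def using assms by (simp add: ln_one_plus_pos add_pos_pos)
  ultimately show ?thesis
    using assms by (simp add: ela divide_strict_left_mono)
qed

lemma elasticity_bounds:
  assumes "0 < a" "0 < t"
  shows "a / (1 + t powr a) \<le> elasticity a t"
    and "elasticity a t < a"
    and "elasticity a t \<le> a / ln (1 + t powr a)"
proof -
  define u where "u = t powr a"
  have u: "0 < u" "0 < ln (1 + u)" "ln (1 + u) \<le> u" "u / (1 + u) < ln (1 + u)"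
    using assms ln_add1_gt[of u] ln_add_one_self_le_self[of u]
    by (simp_all add: u_def ln_one_plus_pos add.commute)
  have ela: "elasticity a t = a * (u / ((1 + u) * ln (1 + u)))"
    unfolding elasticity_def u_def by simp
  have "1 / (1 + u) = u / ((1 + u) * u)"
    using u by simp
  also have "\<dots> \<le> u / ((1 + u) * ln (1 + u))"
    using u by (intro divide_left_mono mult_left_mono mult_pos_pos) auto
  finally have lower: "1 / (1 + u) \<le> u / ((1 + u) * ln (1 + u))" .
  show "a / (1 + t powr a) \<le> elasticity a t"
    using mult_left_mono[OF lower, of a] assms by (simp add: ela u_def[symmetric])
  have below_one: "u / ((1 + u) * ln (1 + u)) < 1"
    using u by (simp add: field_simps)
  show "elasticity a t < a"
    using mult_strict_left_mono[OF below_one, of a] assms by (simp add: ela)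
  have upper: "u / ((1 + u) * ln (1 + u)) \<le> 1 / ln (1 + u)"
    using u by (simp add: field_simps)
  show "elasticity a t \<le> a / ln (1 + t powr a)"
    using mult_left_mono[OF upper, of a] assms by (simp add: ela u_def[symmetric])
qed

section \<open>Log-concavity of the payoff\<close>

lemma strictly_below_tangent:
  fixes f f' :: "real \<Rightarrow> real"
  assumes deriv: "\<And>y. (f has_real_derivative f' y) (at y)"
    and decr: "\<And>y z. y < z \<Longrightarrow> f' z < f' y"
    and "y \<noteq> y0"
  shows "f y < f y0 + f' y0 * (y - y0)"
proof (cases "y0 < y")
  case True
  then obtain z where "y0 < z" "f y - f y0 = (y - y0) * f' z"
    using MVT2[OF True] deriv by blast
  moreover have "(y - y0) * f' z < (y - y0) * f' y0"
    using decr[OF \<open>y0 < z\<close>] True by simp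
  ultimately show ?thesis by (simp add: algebra_simps)
next
  case False
  then have "y < y0" using \<open>y \<noteq> y0\<close> by simp
  then obtain z where "z < y0" "f y0 - f y = (y0 - y) * f' z"
    using MVT2[of y y0 f f'] deriv by blast
  moreover have "(y0 - y) * f' y0 < (y0 - y) * f' z"
    using decr[OF \<open>z < y0\<close>] \<open>y < y0\<close> by simp
  ultimately show ?thesis by (simp add: algebra_simps)
qed

lemma ln_ln1p_powr_below_tangent:
  assumes "0 < a" "0 < t" "0 < t0" "t \<noteq> t0"
  shows "ln (ln (1 + t powr a)) < ln (ln (1 + t0 powr a)) + elasticity a t0 * (ln t - ln t0)"
proof -
  have "((\<lambda>y. ln (ln (1 + exp y powr a))) has_real_derivative elasticity a (exp y)) (at y)" for y
  proof -
    have "0 < ln (1 + exp (y * a))" by (simp add: ln_one_plus_pos)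
    then show ?thesis
      unfolding exp_powr_real elasticity_def
      by (auto intro!: derivative_eq_intros simp: field_simps add_pos_pos)
  qed
  moreover have "elasticity a (exp z) < elasticity a (exp y)" if "y < z" for y z
    using that assms by (intro elasticity_strict_decreasing) auto
  moreover have "ln t \<noteq> ln t0" using assms by simp
  ultimately have "ln (ln (1 + exp (ln t) powr a))
      < ln (ln (1 + exp (ln t0) powr a)) + elasticity a (exp (ln t0)) * (ln t - ln t0)"
    by (rule strictly_below_tangent)
  then show ?thesis using assms by simp
qed

lemma ln_tangent_less:
  fixes w w0 :: real
  assumes "0 < w" "0 < w0" "w \<noteq> w0"
  shows "w0 * (ln w - ln w0) < w - w0"
proof -
  have "ln (w / w0) \<noteq> w / w0 - 1"
    using ln_eq_minus_one[of "w / w0"] assms by auto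
  then have "ln (w / w0) < w / w0 - 1"
    using ln_le_minus_one[of "w / w0"] assms by simp
  then have "w0 * ln (w / w0) < w0 * (w / w0 - 1)"
    using assms by simp
  then show ?thesis using assms by (simp add: ln_div algebra_simps)
qed

lemma ln_tangent_le: "0 < (w::real) \<Longrightarrow> 0 < w0 \<Longrightarrow> w0 * (ln w - ln w0) \<le> w - w0"
  using ln_tangent_less[of w w0] by (cases "w = w0") auto

definition payoff_against :: "real \<Rightarrow> real \<Rightarrow> real \<Rightarrow> real" where
  "payoff_against a lam L =
     (SUP \<beta>\<in>{0<..}. L * ln (1 + \<beta>) * exp (- (L + lam) * \<beta> powr (1 / a)))"

text \<open>The function under the supremum in \<open>payoff_against\<close>, in the variable \<open>t = \<beta> powr (1 / a)\<close>.\<close>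
definition payoff_at :: "real \<Rightarrow> real \<Rightarrow> real \<Rightarrow> real \<Rightarrow> real" where
  "payoff_at a lam L t = L * ln (1 + t powr a) * exp (- (L + lam) * t)"

lemma payoff_at_pos: "0 < L \<Longrightarrow> 0 < t \<Longrightarrow> 0 < payoff_at a lam L t"
  unfolding payoff_at_def by (simp add: ln_one_plus_pos)

lemma ln_payoff_at:
  "0 < L \<Longrightarrow> 0 < t \<Longrightarrow>
    ln (payoff_at a lam L t) = ln L + ln (ln (1 + t powr a)) - L * t - lam * t"
  using ln_one_plus_pos[of "t powr a"] unfolding payoff_at_def by (simp add: ln_mult algebra_simps)

text \<open>Strict concavity in \<open>(ln L, ln t)\<close>: the term \<open>ln (ln (1 + t powr a))\<close> is strictly
  concave in \<open>ln t\<close>, and \<open>- L * t = - exp (ln L + ln t)\<close> is strictly concave along the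
  remaining direction \<open>t = t0\<close>.\<close>
lemma ln_payoff_at_below_supergradient:
  assumes "0 < a" "0 \<le> lam" "0 < L0" "0 < t0" "0 < L" "0 < t" "(L, t) \<noteq> (L0, t0)"
  shows "ln (payoff_at a lam L t) < ln (payoff_at a lam L0 t0) + (1 - L0 * t0) * (ln L - ln L0)
           + (elasticity a t0 - (L0 + lam) * t0) * (ln t - ln t0)"
proof -
  have lam: "lam * (t0 * (ln t - ln t0)) \<le> lam * (t - t0)"
    using ln_tangent_le[of t t0] assms by (intro mult_left_mono) auto
  have "ln (ln (1 + t powr a)) - L * t < ln (ln (1 + t0 powr a)) + elasticity a t0 * (ln t - ln t0)
          - L0 * t0 - L0 * t0 * (ln (L * t) - ln (L0 * t0))"
  proof (cases "t = t0")
    case True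
    then have "L * t \<noteq> L0 * t0" using assms by auto
    then show ?thesis using ln_tangent_less[of "L * t" "L0 * t0"] True assms by simp
  next
    case False
    then show ?thesis
      using ln_ln1p_powr_below_tangent[of a t t0] ln_tangent_le[of "L * t" "L0 * t0"] assms
      by simp
  qed
  with lam show ?thesis
    using assms by (simp add: ln_payoff_at ln_mult algebra_simps)
qed

lemma ln_payoff_at_le_supergradient:
  assumes "0 < a" "0 \<le> lam" "0 < L0" "0 < t0" "0 < L" "0 < t"
  shows "ln (payoff_at a lam L t) \<le> ln (payoff_at a lam L0 t0) + (1 - L0 * t0) * (ln L - ln L0)
           + (elasticity a t0 - (L0 + lam) * t0) * (ln t - ln t0)"
  using ln_payoff_at_below_supergradient[OF assms] by (cases "(L, t) = (L0, t0)") auto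

section \<open>Optimal thresholds and best responses\<close>

lemma continuous_on_elasticity:
  assumes "0 < t1"
  shows "continuous_on {t1..t2} (elasticity a)"
proof -
  have "0 < ln (1 + t powr a)" "0 < 1 + t powr a" if "t \<in> {t1..t2}" for t
    using that assms ln_one_plus_pos[of "t powr a"] by (auto intro: add_pos_pos)
  then show ?thesis
    unfolding elasticity_def using assms by (intro continuous_intros) force+
qed

lemma exists_elasticity_above_line:
  assumes "1 \<le> a" "0 \<le> c" "c < a" "0 \<le> d"
  shows "\<exists>t1. 0 < t1 \<and> t1 \<le> 1 \<and> c + d * t1 \<le> elasticity a t1"
proof -
  define K where "K = c + 2 * d + 1"
  define t1 where "t1 = min 1 ((a - c) / (2 * K))"
  have "0 < K" using assms by (simp add: K_def)
  have t1: "0 < t1" "t1 \<le> 1" "t1 * K \<le> (a - c) / 2"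
    using assms \<open>0 < K\<close> by (auto simp: t1_def field_simps min_def)
  have "(c + d * t1) * (1 + t1) \<le> c + t1 * (c + 2 * d)"
    using t1 assms mult_left_le[of t1 "d * t1"] by (simp add: algebra_simps)
  also have "\<dots> < a"
  proof -
    have "t1 * (c + 2 * d) + t1 \<le> (a - c) / 2" using t1(3) by (simp add: K_def algebra_simps)
    then show ?thesis using t1(1) assms(3) by (simp add: field_simps)
  qed
  finally have "c + d * t1 \<le> a / (1 + t1)"
    using t1 by (simp add: field_simps)
  also have "\<dots> \<le> a / (1 + t1 powr a)"
    using t1 assms powr_le_one_le[of t1 a] by (intro divide_left_mono mult_pos_pos add_pos_pos) auto
  also have "\<dots> \<le> elasticity a t1"
    using t1 assms by (intro elasticity_bounds) auto
  finally show ?thesis using t1 by blast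
qed

lemma exists_elasticity_below_line:
  assumes "1 \<le> a" "0 \<le> c" "0 \<le> d" "0 < c + d"
  shows "\<exists>t2. 1 \<le> t2 \<and> elasticity a t2 \<le> c + d * t2"
proof (cases "d = 0")
  case False
  define t2 where "t2 = max 1 (a / d)"
  have "a / d \<le> t2" by (simp add: t2_def)
  then have "a \<le> d * t2" using assms False by (simp add: pos_divide_le_eq mult.commute)
  moreover have "1 \<le> t2" by (simp add: t2_def)
  ultimately show ?thesis
    using elasticity_bounds(2)[of a t2] assms by (intro exI[of _ t2]) auto
next
  case True
  then have "0 < c" using assms by simp
  define t2 where "t2 = max 1 (exp (a / c))"
  have "1 \<le> t2" by (simp add: t2_def)
  have "exp (a / c) \<le> t2 powr 1" by (simp add: t2_def)
  also have "\<dots> \<le> t2 powr a" using \<open>1 \<le> t2\<close> assms by (intro powr_mono) auto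
  also have "\<dots> < 1 + t2 powr a" by simp
  finally have ln_large: "a / c < ln (1 + t2 powr a)"
    using ln_less_cancel_iff[of "exp (a / c)" "1 + t2 powr a"] powr_ge_zero[of t2 a] by simp
  moreover have "0 < a / c" using \<open>0 < c\<close> assms by simp
  ultimately have "0 < ln (1 + t2 powr a)" by linarith
  then have "a / ln (1 + t2 powr a) < c"
    using ln_large \<open>0 < c\<close> by (simp add: field_simps)
  then show ?thesis
    using elasticity_bounds(3)[of a t2] assms \<open>1 \<le> t2\<close> True by (intro exI[of _ t2]) simp
qed

lemma exists_elasticity_root:
  assumes "1 \<le> a" "0 \<le> c" "c < a" "0 \<le> d" "0 < c + d"
  shows "\<exists>t>0. elasticity a t = c + d * t"
proof -
  obtain t1 t2 where "0 < t1" "t1 \<le> 1" "1 \<le> t2"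
    and "c + d * t1 \<le> elasticity a t1" "elasticity a t2 \<le> c + d * t2"
    using exists_elasticity_above_line[of a c d] exists_elasticity_below_line[of a c d] assms
    by blast
  moreover have "continuous_on {t1..t2} (\<lambda>t. elasticity a t - c - d * t)"
    using continuous_on_elasticity[OF \<open>0 < t1\<close>] by (intro continuous_intros) auto
  ultimately obtain t where "t1 \<le> t" "elasticity a t - c - d * t = 0"
    using IVT2'[of "\<lambda>t. elasticity a t - c - d * t" t2 0 t1] by fastforce
  then show ?thesis using \<open>0 < t1\<close> by (intro exI[of _ t]) auto
qed

lemma elasticity_diff_strict_decreasing:
  assumes "0 < a" "0 \<le> d" "0 < t" "t < t'"
  shows "elasticity a t' - d * t' < elasticity a t - d * t"
  using elasticity_strict_decreasing[OF assms(1,3,4)] mult_left_mono[of t t' d] assms by simp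

lemma elasticity_diff_less_iff:
  assumes "0 < a" "0 \<le> d" "0 < t" "0 < t'"
  shows "elasticity a t - d * t < elasticity a t' - d * t' \<longleftrightarrow> t' < t"
  using elasticity_diff_strict_decreasing[of a d t t'] elasticity_diff_strict_decreasing[of a d t' t]
    assms by (cases t t' rule: linorder_cases) auto

lemma elasticity_diff_eq_iff:
  assumes "0 < a" "0 \<le> d" "0 < t" "0 < t'"
  shows "elasticity a t - d * t = elasticity a t' - d * t' \<longleftrightarrow> t = t'"
  using elasticity_diff_less_iff[OF assms] elasticity_diff_less_iff[OF assms(1,2,4,3)]
  by (cases t t' rule: linorder_cases) auto

lemma payoff_against_zero [simp]: "payoff_against a lam 0 = 0"
  unfolding payoff_against_def by simp

lemma payoff_against_eq_payoff_at:
  assumes "0 < a" "0 \<le> lam" "0 < L" "0 < t" "elasticity a t = (L + lam) * t"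
  shows "payoff_against a lam L = payoff_at a lam L t"
  unfolding payoff_against_def
proof (rule cSup_eq_maximum)
  have "payoff_at a lam L t = L * ln (1 + t powr a) * exp (- (L + lam) * (t powr a) powr (1 / a))"
    using assms by (simp add: payoff_at_def powr_powr)
  then show "payoff_at a lam L t
      \<in> (\<lambda>\<beta>. L * ln (1 + \<beta>) * exp (- (L + lam) * \<beta> powr (1 / a))) ` {0<..}"
    using assms by (intro rev_image_eqI[of "t powr a"]) auto
next
  fix x assume "x \<in> (\<lambda>\<beta>. L * ln (1 + \<beta>) * exp (- (L + lam) * \<beta> powr (1 / a))) ` {0<..}"
  then obtain \<beta> where "0 < \<beta>" and x: "x = L * ln (1 + \<beta>) * exp (- (L + lam) * \<beta> powr (1 / a))"
    by auto
  define s where "s = \<beta> powr (1 / a)"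
  have "0 < s" using \<open>0 < \<beta>\<close> by (simp add: s_def)
  have "x = payoff_at a lam L s"
    using \<open>0 < \<beta>\<close> assms by (simp add: x s_def payoff_at_def powr_powr)
  moreover have "ln (payoff_at a lam L s) \<le> ln (payoff_at a lam L t)"
    using ln_payoff_at_le_supergradient[of a lam L t L s] \<open>0 < s\<close> assms by simp
  ultimately show "x \<le> payoff_at a lam L t"
    using payoff_at_pos[of L s] payoff_at_pos[of L t] \<open>0 < s\<close> assms by simp
qed

lemma min_inverse_mult: "0 < t \<Longrightarrow> min N (1 / t) * t = min (N * t) (1 :: real)"
  by (auto simp: min_def field_simps)

lemma payoff_against_less:
  assumes "1 \<le> a" "0 \<le> lam" "0 < N" "0 < t0" "L0 = min N (1 / t0)"
    and "elasticity a t0 = (L0 + lam) * t0" and "L \<in> {0..N}" "L \<noteq> L0"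
  shows "payoff_against a lam L < payoff_against a lam L0"
proof -
  have "0 < L0" using assms by simp
  have p0: "payoff_against a lam L0 = payoff_at a lam L0 t0"
    using assms \<open>0 < L0\<close> by (intro payoff_against_eq_payoff_at) auto
  show ?thesis
  proof (cases "L = 0")
    case True
    then show ?thesis using p0 payoff_at_pos[OF \<open>0 < L0\<close> \<open>0 < t0\<close>] by simp
  next
    case False
    then have "0 < L" using assms by simp
    obtain t where "0 < t" "elasticity a t = 0 + (L + lam) * t"
      using exists_elasticity_root[of a 0 "L + lam"] \<open>0 < L\<close> assms by auto
    then have pL: "payoff_against a lam L = payoff_at a lam L t"
      using \<open>0 < L\<close> assms by (intro payoff_against_eq_payoff_at) auto
    txt \<open>The slope \<open>1 - L0 * t0\<close> of the log-payoff in \<open>ln L\<close> vanishes unless the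
      constraint \<open>L0 = N\<close> binds, and then \<open>ln L \<le> ln L0\<close>.\<close>
    have "(1 - L0 * t0) * (ln L - ln L0) \<le> 0"
    proof (cases "N \<le> 1 / t0")
      case True
      then have "L0 = N" "L0 * t0 \<le> 1" using assms by (auto simp: field_simps)
      then show ?thesis using \<open>0 < L\<close> assms by (intro mult_nonneg_nonpos) auto
    next
      case False
      then show ?thesis using assms by simp
    qed
    then have "ln (payoff_at a lam L t) < ln (payoff_at a lam L0 t0)"
      using ln_payoff_at_below_supergradient[of a lam L0 t0 L t] \<open>0 < L\<close> \<open>0 < t\<close> \<open>0 < L0\<close> assms
      by simp
    then show ?thesis
      using pL p0 payoff_at_pos[OF \<open>0 < L\<close> \<open>0 < t\<close>] payoff_at_pos[OF \<open>0 < L0\<close> \<open>0 < t0\<close>] by simp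
  qed
qed

lemma exists_best_response_threshold:
  assumes "1 < a" "0 \<le> lam" "0 < N"
  shows "\<exists>t>0. elasticity a t = (min N (1 / t) + lam) * t"
proof -
  obtain t1 where t1: "0 < t1" "elasticity a t1 = 1 + lam * t1"
    using exists_elasticity_root[of a 1 lam] assms by auto
  show ?thesis
  proof (cases "1 / t1 \<le> N")
    case True
    then show ?thesis using t1 by (intro exI[of _ t1]) (simp add: min_def algebra_simps)
  next
    case False
    then have "N * t1 < 1" using t1 by (simp add: field_simps)
    obtain t2 where t2: "0 < t2" "elasticity a t2 = 0 + (N + lam) * t2"
      using exists_elasticity_root[of a 0 "N + lam"] assms by auto
    have "N * t2 \<le> 1"
    proof (rule ccontr)
      assume "\<not> N * t2 \<le> 1"
      then have "elasticity a t1 - lam * t1 < elasticity a t2 - lam * t2"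
        using t1 t2 by (simp add: algebra_simps)
      then have "t2 < t1" using elasticity_diff_less_iff[of a lam t1 t2] t1 t2 assms by simp
      then have "N * t2 < N * t1" using assms by simp
      with \<open>\<not> N * t2 \<le> 1\<close> \<open>N * t1 < 1\<close> show False by simp
    qed
    then have "min N (1 / t2) = N" using t2 by (simp add: min_def field_simps)
    then show ?thesis using t2 by auto
  qed
qed

lemma best_response_iff:
  assumes "1 < a" "0 \<le> lam" "0 < N" "L \<in> {0..N}"
  shows "(\<forall>L'\<in>{0..N}. payoff_against a lam L' \<le> payoff_against a lam L) \<longleftrightarrow>
    (\<exists>t>0. L = min N (1 / t) \<and> elasticity a t = (L + lam) * t)"
proof
  assume max: "\<forall>L'\<in>{0..N}. payoff_against a lam L' \<le> payoff_against a lam L"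
  obtain t where t: "0 < t" "elasticity a t = (min N (1 / t) + lam) * t"
    using exists_best_response_threshold[OF assms(1-3)] by blast
  have "L = min N (1 / t)"
  proof (rule ccontr)
    assume "L \<noteq> min N (1 / t)"
    then have "payoff_against a lam L < payoff_against a lam (min N (1 / t))"
      using payoff_against_less[of a lam N t _ L] t assms by simp
    moreover have "min N (1 / t) \<in> {0..N}" using t assms by simp
    ultimately show False using max by fastforce
  qed
  then show "\<exists>t>0. L = min N (1 / t) \<and> elasticity a t = (L + lam) * t" using t by blast
next
  assume "\<exists>t>0. L = min N (1 / t) \<and> elasticity a t = (L + lam) * t"
  then obtain t where "0 < t" "L = min N (1 / t)" "elasticity a t = (L + lam) * t" by blast
  then show "\<forall>L'\<in>{0..N}. payoff_against a lam L' \<le> payoff_against a lam L"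
    using payoff_against_less[of a lam N t L] assms by (metis less_eq_real_def order_refl)
qed

section \<open>Nash equilibria\<close>

lemma payoff_eq_payoff_against:
  "payoff \<alpha> 1 L1 L2 = payoff_against (\<alpha> / 2) L2 L1"
  "payoff \<alpha> 2 L1 L2 = payoff_against (\<alpha> / 2) L1 L2"
  unfolding payoff_def payoff_against_def by (simp_all add: add.commute)

lemma is_nash_iff:
  assumes "2 < \<alpha>" "0 < N1" "0 < N2"
  shows "is_nash \<alpha> N1 N2 p \<longleftrightarrow>
    (\<exists>t>0. elasticity (\<alpha> / 2) t = min (N1 * t) 1 + min (N2 * t) 1
       \<and> p = (min N1 (1 / t), min N2 (1 / t)))"
proof -
  obtain p1 p2 where p: "p = (p1, p2)" by fastforce
  have a: "1 < \<alpha> / 2" using assms by simp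
  have "is_nash \<alpha> N1 N2 p \<longleftrightarrow> p1 \<in> {0..N1} \<and> p2 \<in> {0..N2} \<and>
      (\<exists>t1>0. p1 = min N1 (1 / t1) \<and> elasticity (\<alpha> / 2) t1 = (p1 + p2) * t1) \<and>
      (\<exists>t2>0. p2 = min N2 (1 / t2) \<and> elasticity (\<alpha> / 2) t2 = (p2 + p1) * t2)"
    unfolding is_nash_def p fst_conv snd_conv payoff_eq_payoff_against
    using best_response_iff[OF a, of p2 N1 p1] best_response_iff[OF a, of p1 N2 p2] assms
    by auto
  also have "\<dots> \<longleftrightarrow> (\<exists>t>0. elasticity (\<alpha> / 2) t = min (N1 * t) 1 + min (N2 * t) 1
       \<and> p = (min N1 (1 / t), min N2 (1 / t)))"
  proof
    assume "p1 \<in> {0..N1} \<and> p2 \<in> {0..N2} \<and>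
      (\<exists>t1>0. p1 = min N1 (1 / t1) \<and> elasticity (\<alpha> / 2) t1 = (p1 + p2) * t1) \<and>
      (\<exists>t2>0. p2 = min N2 (1 / t2) \<and> elasticity (\<alpha> / 2) t2 = (p2 + p1) * t2)"
    then obtain t1 t2 where "p1 \<ge> 0" "p2 \<ge> 0" "0 < t1" "0 < t2"
      and t1: "p1 = min N1 (1 / t1)" "elasticity (\<alpha> / 2) t1 - (p1 + p2) * t1 = 0"
      and t2: "p2 = min N2 (1 / t2)" "elasticity (\<alpha> / 2) t2 - (p1 + p2) * t2 = 0"
      by (auto simp: add.commute)
    then have "t1 = t2"
      using elasticity_diff_eq_iff[of "\<alpha> / 2" "p1 + p2" t1 t2] assms by simp
    then show "\<exists>t>0. elasticity (\<alpha> / 2) t = min (N1 * t) 1 + min (N2 * t) 1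
       \<and> p = (min N1 (1 / t), min N2 (1 / t))"
      using t1 t2 \<open>0 < t1\<close> min_inverse_mult[of t1 N1] min_inverse_mult[of t1 N2] p
      by (intro exI[of _ t1]) (auto simp: algebra_simps)
  next
    assume "\<exists>t>0. elasticity (\<alpha> / 2) t = min (N1 * t) 1 + min (N2 * t) 1
       \<and> p = (min N1 (1 / t), min N2 (1 / t))"
    then obtain t where "0 < t" "elasticity (\<alpha> / 2) t = min (N1 * t) 1 + min (N2 * t) 1"
      "p1 = min N1 (1 / t)" "p2 = min N2 (1 / t)"
      using p by auto
    then show "p1 \<in> {0..N1} \<and> p2 \<in> {0..N2} \<and>
      (\<exists>t1>0. p1 = min N1 (1 / t1) \<and> elasticity (\<alpha> / 2) t1 = (p1 + p2) * t1) \<and>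
      (\<exists>t2>0. p2 = min N2 (1 / t2) \<and> elasticity (\<alpha> / 2) t2 = (p2 + p1) * t2)"
      using min_inverse_mult[of t N1] min_inverse_mult[of t N2] assms
      by (auto simp: algebra_simps)
  qed
  finally show ?thesis .
qed

lemma is_nash_unique:
  assumes "2 < \<alpha>" "0 < N1" "0 < N2" "is_nash \<alpha> N1 N2 p" "is_nash \<alpha> N1 N2 q"
  shows "p = q"
proof -
  define \<psi> where "\<psi> t = min (N1 * t) 1 + min (N2 * t) (1 :: real)" for t
  have no_crossing: "\<not> s < s'"
    if "0 < s" "elasticity (\<alpha> / 2) s = \<psi> s" "elasticity (\<alpha> / 2) s' = \<psi> s'" for s s'
  proof
    assume "s < s'"
    then have "elasticity (\<alpha> / 2) s' < elasticity (\<alpha> / 2) s"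
      using that assms by (intro elasticity_strict_decreasing) auto
    moreover have "\<psi> s \<le> \<psi> s'"
      unfolding \<psi>_def using \<open>s < s'\<close> assms by (intro add_mono min.mono) auto
    ultimately show False using that by simp
  qed
  obtain t t' where "0 < t" "elasticity (\<alpha> / 2) t = \<psi> t" "p = (min N1 (1 / t), min N2 (1 / t))"
    and "0 < t'" "elasticity (\<alpha> / 2) t' = \<psi> t'" "q = (min N1 (1 / t'), min N2 (1 / t'))"
    using assms is_nash_iff[of \<alpha> N1 N2] unfolding \<psi>_def by meson
  then show ?thesis using no_crossing by (metis linorder_neqE)
qed

lemma is_nash_symmetric:
  assumes "2 < \<alpha>" "0 < N1" "N1 \<le> N2" "0 < ts" "elasticity (\<alpha> / 2) ts = 2" "1 / ts < N1"
  shows "is_nash \<alpha> N1 N2 (1 / ts, 1 / ts)"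
proof -
  have "1 < N1 * ts" using assms by (simp add: field_simps)
  moreover have "N1 * ts \<le> N2 * ts" using assms by simp
  ultimately have "1 < N2 * ts" by linarith
  with \<open>1 < N1 * ts\<close> show ?thesis
    using assms by (subst is_nash_iff) (auto intro!: exI[of _ ts] simp: min_def)
qed

lemma is_nash_boundary:
  assumes "2 < \<alpha>" "0 < N1" "N1 \<le> N2" "0 < ts" "elasticity (\<alpha> / 2) ts = 2" "N1 \<le> 1 / ts"
    and "0 < tau" "elasticity (\<alpha> / 2) tau = 1 + N1 * tau"
  shows "is_nash \<alpha> N1 N2 (N1, min (1 / tau) N2)"
proof -
  have "0 < \<alpha> / 2" "0 < N2" using assms by auto
  have "N1 * tau \<le> 1"
  proof (rule ccontr)
    assume "\<not> N1 * tau \<le> 1"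
    then have "elasticity (\<alpha> / 2) ts - 0 * ts < elasticity (\<alpha> / 2) tau - 0 * tau"
      using assms by simp
    then have "tau < ts" using elasticity_diff_less_iff \<open>0 < \<alpha> / 2\<close> assms by blast
    then have "N1 * tau < N1 * ts" using assms by simp
    moreover have "N1 * ts \<le> 1" using assms by (simp add: field_simps)
    ultimately show False using \<open>\<not> N1 * tau \<le> 1\<close> by simp
  qed
  show ?thesis
  proof (cases "1 / tau \<le> N2")
    case True
    then have "1 \<le> N2 * tau" "N1 \<le> 1 / tau" using \<open>N1 * tau \<le> 1\<close> assms by (simp_all add: field_simps)
    then show ?thesis
      using True \<open>N1 * tau \<le> 1\<close> \<open>0 < N2\<close> assms
      by (subst is_nash_iff) (auto intro!: exI[of _ tau] simp: min_def)
  next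
    case False
    then have "N2 * tau < 1" using assms by (simp add: field_simps)
    obtain tB where tB: "0 < tB" "elasticity (\<alpha> / 2) tB = 0 + (N1 + N2) * tB"
      using exists_elasticity_root[of "\<alpha> / 2" 0 "N1 + N2"] assms by auto
    have "N2 * tB \<le> 1"
    proof (rule ccontr)
      assume "\<not> N2 * tB \<le> 1"
      then have "elasticity (\<alpha> / 2) tau - N1 * tau < elasticity (\<alpha> / 2) tB - N1 * tB"
        using assms tB by (simp add: algebra_simps)
      then have "tB < tau" using elasticity_diff_less_iff[of "\<alpha> / 2" N1 tau tB] tB assms by simp
      then have "N2 * tB < N2 * tau" using \<open>0 < N2\<close> by simp
      with \<open>\<not> N2 * tB \<le> 1\<close> \<open>N2 * tau < 1\<close> show False by simp
    qed
    moreover have "N1 * tB \<le> N2 * tB" using assms tB by simp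
    ultimately have "N1 * tB \<le> 1" by linarith
    have "N1 \<le> 1 / tB" "N2 \<le> 1 / tB"
      using \<open>N1 * tB \<le> 1\<close> \<open>N2 * tB \<le> 1\<close> tB by (simp_all add: field_simps)
    then show ?thesis
      using False tB \<open>N1 * tB \<le> 1\<close> \<open>N2 * tB \<le> 1\<close> \<open>0 < N2\<close> assms
      by (subst is_nash_iff) (auto intro!: exI[of _ tB] simp: min_def algebra_simps)
  qed
qed

lemma elasticity_inverse:
  assumes "0 < x"
  shows "elasticity a (1 / x) = a / ((1 + x powr a) * ln (1 + x powr - a))"
proof -
  define v where "v = x powr - a"
  have "0 < v" "0 < ln (1 + v)" using assms ln_one_plus_pos[of v] by (simp_all add: v_def)
  moreover have powers: "(1 / x) powr a = v" "x powr a = 1 / v"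
    using assms by (simp_all add: v_def powr_minus_divide powr_divide)
  ultimately show ?thesis
    unfolding elasticity_def v_def[symmetric] powers by (simp add: field_simps)
qed

lemma sqrt_Lambda_star:
  assumes "0 < \<alpha>" "0 < ts" "elasticity (\<alpha> / 2) ts = 2"
  shows "sqrt (Lambda_star \<alpha>) = 1 / ts"
proof -
  have equation_iff: "\<alpha> / 4 = (1 + L powr (\<alpha> / 4)) * ln (1 + L powr (- \<alpha> / 4))
      \<longleftrightarrow> elasticity (\<alpha> / 2) (1 / sqrt L) = 2" if "0 < L" for L
  proof -
    define s where "s = sqrt L"
    have "0 < s" using that by (simp add: s_def)
    have powers: "L powr (\<alpha> / 4) = s powr (\<alpha> / 2)" "L powr (- \<alpha> / 4) = s powr - (\<alpha> / 2)"
      using that by (simp_all add: s_def powr_half_sqrt[symmetric] powr_powr)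
    define X where "X = (1 + s powr (\<alpha> / 2)) * ln (1 + s powr - (\<alpha> / 2))"
    have "0 < X"
      using \<open>0 < s\<close> ln_one_plus_pos[of "s powr - (\<alpha> / 2)"] by (simp add: X_def add_pos_pos)
    have "elasticity (\<alpha> / 2) (1 / sqrt L) = (\<alpha> / 2) / X"
      using elasticity_inverse[OF \<open>0 < s\<close>] by (simp add: s_def X_def)
    then show ?thesis
      unfolding powers X_def[symmetric] using \<open>0 < X\<close> by (auto simp: field_simps)
  qed
  have "Lambda_star \<alpha> = 1 / ts\<^sup>2"
    unfolding Lambda_star_def
  proof (rule the_equality)
    show "0 < 1 / ts\<^sup>2 \<and> \<alpha> / 4 = (1 + (1 / ts\<^sup>2) powr (\<alpha> / 4)) * ln (1 + (1 / ts\<^sup>2) powr (- \<alpha> / 4))"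
      using equation_iff[of "1 / ts\<^sup>2"] assms by (simp add: real_sqrt_divide)
  next
    fix L assume L: "0 < L \<and> \<alpha> / 4 = (1 + L powr (\<alpha> / 4)) * ln (1 + L powr (- \<alpha> / 4))"
    then have "elasticity (\<alpha> / 2) (1 / sqrt L) = 2" using equation_iff by blast
    then have "elasticity (\<alpha> / 2) (1 / sqrt L) - 0 * (1 / sqrt L) = elasticity (\<alpha> / 2) ts - 0 * ts"
      using assms by simp
    then have "1 / sqrt L = ts"
      using elasticity_diff_eq_iff[of "\<alpha> / 2" 0 "1 / sqrt L" ts] L assms by simp
    then have "sqrt L = 1 / ts" using L assms by (auto simp: field_simps)
    then show "L = 1 / ts\<^sup>2" using real_sqrt_pow2[of L] L by (simp add: power_divide)
  qed
  then show ?thesis using assms by (simp add: real_sqrt_divide)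
qed

lemma x_sol_eq:
  assumes "0 < \<alpha>" "0 \<le> N1" "0 < tau" "elasticity (\<alpha> / 2) tau = 1 + N1 * tau"
  shows "x_sol \<alpha> N1 = 1 / tau"
proof -
  have equation_iff: "N1 = x * (\<alpha> / (2 * (1 + x powr (\<alpha> / 2)) * ln (1 + x powr (- \<alpha> / 2))) - 1)
      \<longleftrightarrow> elasticity (\<alpha> / 2) (1 / x) - N1 * (1 / x) = 1" if "0 < x" for x
  proof -
    have "\<alpha> / (2 * (1 + x powr (\<alpha> / 2)) * ln (1 + x powr (- \<alpha> / 2))) = elasticity (\<alpha> / 2) (1 / x)"
      using elasticity_inverse[of x "\<alpha> / 2"] that by (simp add: mult.assoc)
    then show ?thesis using that by (auto simp: field_simps)
  qed
  show ?thesis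
    unfolding x_sol_def
  proof (rule the_equality)
    show "0 < 1 / tau \<and> N1 = 1 / tau * (\<alpha> / (2 * (1 + (1 / tau) powr (\<alpha> / 2))
        * ln (1 + (1 / tau) powr (- \<alpha> / 2))) - 1)"
      using equation_iff[of "1 / tau"] assms by simp
  next
    fix x assume x: "0 < x \<and> N1 = x * (\<alpha> / (2 * (1 + x powr (\<alpha> / 2)) * ln (1 + x powr (- \<alpha> / 2))) - 1)"
    then have "elasticity (\<alpha> / 2) (1 / x) - N1 * (1 / x) = 1" using equation_iff by blast
    then have "elasticity (\<alpha> / 2) (1 / x) - N1 * (1 / x) = elasticity (\<alpha> / 2) tau - N1 * tau"
      using assms by simp
    then have "1 / x = tau"
      using elasticity_diff_eq_iff[of "\<alpha> / 2" N1 "1 / x" tau] x assms by simp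
    then show "x = 1 / tau" using x by auto
  qed
qed

theorem theorem5:
  fixes \<alpha> N1 N2 :: real
  assumes "\<alpha> > 4" and "0 < N1" and "N1 \<le> N2"
  shows "(\<exists>!p. is_nash \<alpha> N1 N2 p) \<and>
         (if sqrt (Lambda_star \<alpha>) < N1
          then is_nash \<alpha> N1 N2 (sqrt (Lambda_star \<alpha>), sqrt (Lambda_star \<alpha>))
          else is_nash \<alpha> N1 N2 (N1, min (x_sol \<alpha> N1) N2))"
proof -
  txt \<open>The hypothesis \<open>\<alpha> > 4\<close> is what makes the symmetric equation \<open>elasticity (\<alpha> / 2) t = 2\<close>
    solvable, the elasticity taking exactly the values in \<open>(0, \<alpha> / 2)\<close>.\<close>
  obtain ts where ts: "0 < ts" "elasticity (\<alpha> / 2) ts = 2"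
    using exists_elasticity_root[of "\<alpha> / 2" 2 0] assms by auto
  obtain tau where tau: "0 < tau" "elasticity (\<alpha> / 2) tau = 1 + N1 * tau"
    using exists_elasticity_root[of "\<alpha> / 2" 1 N1] assms by auto
  have "sqrt (Lambda_star \<alpha>) = 1 / ts" "x_sol \<alpha> N1 = 1 / tau"
    using sqrt_Lambda_star[OF _ ts] x_sol_eq[OF _ _ tau] assms by auto
  moreover have "is_nash \<alpha> N1 N2 (if 1 / ts < N1 then (1 / ts, 1 / ts) else (N1, min (1 / tau) N2))"
    using is_nash_symmetric[OF _ _ _ ts] is_nash_boundary[OF _ _ _ ts _ tau] assms by auto
  moreover have "p = q" if "is_nash \<alpha> N1 N2 p" "is_nash \<alpha> N1 N2 q" for p q
    using is_nash_unique[OF _ _ _ that] assms by auto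
  ultimately show ?thesis by (metis (full_types))
qed

end
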